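(* The trigonometric polynomial $f(\alpha,\beta,\gamma)=2^{3/2}-\cos(\alpha+\beta+\gamma)-\cos(-\alpha+\beta+\gamma)-\cos(\alpha-\beta+\gamma)+\cos(\alpha+\beta-\gamma)$ is extremal in the class $\sigma(1,1,1)$.
   Context: $\sigma(1,1,1)$ is the set of trigonometric polynomials $f(\alpha,\beta,\gamma)=\sum_{|k|,|\ell|,|m|\le1}q(k,\ell,m)e^{i(k\alpha+\ell\beta+m\gamma)}$ with $f(\alpha,\beta,\gamma)\ge0$ for all real $\alpha,\beta,\gamma$. An element $f$ of a convex cone $U$ is extremal in $U$ if whenever $f=g+h$ with $g,h\in U$, both $g$ and $h$ are nonnegative multiples of $f$. *)

theory Defs
  imports "HOL-Analysis.Analysis"
begin

definition trig111 :: "(int \<Rightarrow> int \<Rightarrow> int \<Rightarrow> complex) \<Rightarrow> real \<Rightarrow> real \<Rightarrow> real \<Rightarrow> complex" where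
  "trig111 q \<alpha> \<beta> \<gamma> =
     (\<Sum>k\<in>{-1..1}. \<Sum>l\<in>{-1..1}. \<Sum>m\<in>{-1..1}.
        q k l m * exp (\<i> * complex_of_real (of_int k * \<alpha> + of_int l * \<beta> + of_int m * \<gamma>)))"

text \<open>sigma(1,1,1): nonnegative trigonometric polynomials of degree (1,1,1).
Since its elements are nonnegative, they are real-valued; we represent them as
real-valued functions of three real variables.\<close>
definition sigma111 :: "(real \<Rightarrow> real \<Rightarrow> real \<Rightarrow> real) set" where
  "sigma111 = {f. (\<exists>q. \<forall>\<alpha> \<beta> \<gamma>. complex_of_real (f \<alpha> \<beta> \<gamma>) = trig111 q \<alpha> \<beta> \<gamma>)
                  \<and> (\<forall>\<alpha> \<beta> \<gamma>. f \<alpha> \<beta> \<gamma> \<ge> 0)}"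

definition extremal_in :: "(real \<Rightarrow> real \<Rightarrow> real \<Rightarrow> real) set \<Rightarrow> (real \<Rightarrow> real \<Rightarrow> real \<Rightarrow> real) \<Rightarrow> bool" where
  "extremal_in U f \<longleftrightarrow> f \<in> U \<and>
     (\<forall>g h. g \<in> U \<longrightarrow> h \<in> U \<longrightarrow> f = (\<lambda>\<alpha> \<beta> \<gamma>. g \<alpha> \<beta> \<gamma> + h \<alpha> \<beta> \<gamma>) \<longrightarrow>
        (\<exists>c\<ge>0. g = (\<lambda>\<alpha> \<beta> \<gamma>. c * f \<alpha> \<beta> \<gamma>)) \<and> (\<exists>d\<ge>0. h = (\<lambda>\<alpha> \<beta> \<gamma>. d * f \<alpha> \<beta> \<gamma>)))"

end

theory Submission
  imports Defs
begin

(* Every element of sigma(1,1,1) is a real combination of the 27 products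
   phi_i(alpha) phi_j(beta) phi_k(gamma) with phi = (1, sqrt 2 cos, sqrt 2 sin). The polynomial
   f of the theorem vanishes at eight points with coordinates in {+-pi/4, +-3pi/4}. If
   0 <= g <= f, these points are minima of g, so g and its three partial derivatives vanish
   there: 32 linear conditions on the 27 coefficients of g, whose solutions are exactly the
   multiples of the coefficients of f. Evaluating at the origin, where f > 0, shows that the
   multiple is nonnegative. In a decomposition f = g + h both summands lie between 0 and f. *)

(* The factor sqrt 2 makes every basis value and derivative at odd multiples of pi/4 equal
   to +-1, so the conditions at the zeros of f have integer coefficients. *)
definition basis :: "nat \<Rightarrow> real \<Rightarrow> real" where
  "basis i t = (if i = 0 then 1 else if i = 1 then sqrt 2 * cos t else sqrt 2 * sin t)"

definition basis_deriv :: "nat \<Rightarrow> real \<Rightarrow> real" where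
  "basis_deriv i t = (if i = 0 then 0 else if i = 1 then - sqrt 2 * sin t else sqrt 2 * cos t)"

lemma has_real_derivative_basis: "(basis i has_real_derivative basis_deriv i t) (at t)"
proof -
  consider "i = 0" | "i = 1" | "i \<noteq> 0 \<and> i \<noteq> 1" by blast
  then show ?thesis
  proof cases
    case 1
    then have "basis i = (\<lambda>t. 1)" by (auto simp: basis_def)
    then show ?thesis using 1 by (simp add: basis_deriv_def)
  next
    case 2
    then have "basis i = (\<lambda>t. sqrt 2 * cos t)" by (auto simp: basis_def)
    then show ?thesis using 2 by (auto simp: basis_deriv_def intro!: derivative_eq_intros)
  next
    case 3
    then have "basis i = (\<lambda>t. sqrt 2 * sin t)" by (auto simp: basis_def)
    then show ?thesis using 3 by (auto simp: basis_deriv_def intro!: derivative_eq_intros)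
  qed
qed

definition tensor_eval :: "(nat \<Rightarrow> nat \<Rightarrow> nat \<Rightarrow> real) \<Rightarrow> (nat \<Rightarrow> real \<Rightarrow> real) \<Rightarrow>
    (nat \<Rightarrow> real \<Rightarrow> real) \<Rightarrow> (nat \<Rightarrow> real \<Rightarrow> real) \<Rightarrow> real \<Rightarrow> real \<Rightarrow> real \<Rightarrow> real" where
  "tensor_eval D u v w a b c = (\<Sum>i<3. \<Sum>j<3. \<Sum>k<3. D i j k * u i a * v j b * w k c)"

abbreviation expansion :: "(nat \<Rightarrow> nat \<Rightarrow> nat \<Rightarrow> real) \<Rightarrow> real \<Rightarrow> real \<Rightarrow> real \<Rightarrow> real" where
  "expansion D \<equiv> tensor_eval D basis basis basis"

lemma sum_lessThan_3: "(\<Sum>i<3. f i) = f 0 + f 1 + (f (2::nat) :: 'a::comm_monoid_add)"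
  by (simp add: eval_nat_numeral add.assoc)

lemma tensor_eval_cong:
  assumes "\<And>i j k. i < 3 \<Longrightarrow> j < 3 \<Longrightarrow> k < 3 \<Longrightarrow> D i j k = E i j k"
  shows "tensor_eval D u v w = tensor_eval E u v w"
  using assms by (simp add: tensor_eval_def fun_eq_iff)

lemma tensor_eval_scale:
  "tensor_eval (\<lambda>i j k. r * D i j k) u v w a b c = r * tensor_eval D u v w a b c"
  by (simp add: tensor_eval_def sum_distrib_left mult.assoc)

definition is_expansion :: "(real \<Rightarrow> real \<Rightarrow> real \<Rightarrow> real) \<Rightarrow> bool" where
  "is_expansion g \<longleftrightarrow> (\<exists>D. g = expansion D)"

lemma is_expansion_add:
  assumes "is_expansion g" and "is_expansion h"
  shows "is_expansion (\<lambda>a b c. g a b c + h a b c)"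
proof -
  obtain D E where "g = expansion D" and "h = expansion E"
    using assms unfolding is_expansion_def by blast
  then have "(\<lambda>a b c. g a b c + h a b c) = expansion (\<lambda>i j k. D i j k + E i j k)"
    by (auto simp: tensor_eval_def sum.distrib algebra_simps intro!: ext)
  then show ?thesis unfolding is_expansion_def by blast
qed

lemma is_expansion_scale:
  assumes "is_expansion g"
  shows "is_expansion (\<lambda>a b c. r * g a b c)"
proof -
  obtain D where "g = expansion D" using assms unfolding is_expansion_def by blast
  then have "(\<lambda>a b c. r * g a b c) = expansion (\<lambda>i j k. r * D i j k)"
    by (auto simp: tensor_eval_def sum_distrib_left algebra_simps intro!: ext)
  then show ?thesis unfolding is_expansion_def by blast
qed

lemma is_expansion_diff:
  assumes "is_expansion g" and "is_expansion h"
  shows "is_expansion (\<lambda>a b c. g a b c - h a b c)"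
  using is_expansion_add[OF assms(1) is_expansion_scale[OF assms(2), of "- 1"]] by simp

lemma is_expansion_sum:
  "finite S \<Longrightarrow> (\<And>x. x \<in> S \<Longrightarrow> is_expansion (g x)) \<Longrightarrow> is_expansion (\<lambda>a b c. \<Sum>x\<in>S. g x a b c)"
proof (induction S rule: finite_induct)
  case empty
  have "(\<lambda>a b c. 0) = expansion (\<lambda>i j k. 0)" by (simp add: tensor_eval_def fun_eq_iff)
  then show ?case unfolding is_expansion_def by auto
next
  case (insert x S)
  then show ?case using is_expansion_add[of "g x" "\<lambda>a b c. \<Sum>x\<in>S. g x a b c"] by simp
qed

definition degree_one :: "(real \<Rightarrow> real) \<Rightarrow> bool" where
  "degree_one u \<longleftrightarrow> (\<exists>p q r. \<forall>t. u t = p + q * cos t + r * sin t)"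

lemma degree_one_basis_coeffs:
  assumes "degree_one u"
  obtains e where "\<And>t. u t = (\<Sum>i<3. e i * basis i t)"
proof -
  obtain p q r where u: "\<And>t. u t = p + q * cos t + r * sin t"
    using assms unfolding degree_one_def by blast
  show thesis
    by (rule that[of "\<lambda>i. if i = 0 then p else if i = 1 then q / sqrt 2 else r / sqrt 2"])
      (simp add: u sum_lessThan_3 basis_def)
qed

lemma is_expansion_prod:
  assumes "degree_one u" and "degree_one v" and "degree_one w"
  shows "is_expansion (\<lambda>a b c. u a * v b * w c)"
proof -
  obtain e1 where u: "\<And>t. u t = (\<Sum>i<3. e1 i * basis i t)"
    using degree_one_basis_coeffs[OF assms(1)] by blast
  obtain e2 where v: "\<And>t. v t = (\<Sum>i<3. e2 i * basis i t)"
    using degree_one_basis_coeffs[OF assms(2)] by blast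
  obtain e3 where w: "\<And>t. w t = (\<Sum>i<3. e3 i * basis i t)"
    using degree_one_basis_coeffs[OF assms(3)] by blast
  have "(\<lambda>a b c. u a * v b * w c) = expansion (\<lambda>i j k. e1 i * e2 j * e3 k)"
    unfolding u v w tensor_eval_def sum_lessThan_3 by (simp add: fun_eq_iff algebra_simps)
  then show ?thesis unfolding is_expansion_def by blast
qed

lemma degree_one_cos_sin_int_mult:
  assumes "k \<in> {-1..1}"
  shows "degree_one (\<lambda>t. cos (of_int k * t))" and "degree_one (\<lambda>t. sin (of_int k * t))"
proof -
  from assms consider "k = -1" | "k = 0" | "k = 1" by fastforce
  then have cos_form:
      "cos (of_int k * t) = (if k = 0 then 1 else 0) + (if k = 0 then 0 else 1) * cos t + 0 * sin t"
    and sin_form: "sin (of_int k * t) = 0 + 0 * cos t + of_int k * sin t" for t :: real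
    by (cases; simp)+
  show "degree_one (\<lambda>t. cos (of_int k * t))"
    unfolding degree_one_def by (intro exI allI, rule cos_form)
  show "degree_one (\<lambda>t. sin (of_int k * t))"
    unfolding degree_one_def by (intro exI allI, rule sin_form)
qed

lemma
  fixes x y z :: real
  shows cos_add3: "cos (x + y + z) = cos x * cos y * cos z - cos x * sin y * sin z
      - sin x * cos y * sin z - sin x * sin y * cos z"
    and sin_add3: "sin (x + y + z) = sin x * cos y * cos z + cos x * sin y * cos z
      + cos x * cos y * sin z - sin x * sin y * sin z"
  by (simp_all add: cos_add sin_add algebra_simps)

lemma is_expansion_cos_sin:
  assumes "k \<in> {-1..1}" and "l \<in> {-1..1}" and "m \<in> {-1..1}"
  shows "is_expansion (\<lambda>a b c. cos (of_int k * a + of_int l * b + of_int m * c))"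
    and "is_expansion (\<lambda>a b c. sin (of_int k * a + of_int l * b + of_int m * c))"
proof -
  note factors = degree_one_cos_sin_int_mult[OF assms(1)] degree_one_cos_sin_int_mult[OF assms(2)]
    degree_one_cos_sin_int_mult[OF assms(3)]
  show "is_expansion (\<lambda>a b c. cos (of_int k * a + of_int l * b + of_int m * c))"
    unfolding cos_add3 by (intro is_expansion_add is_expansion_diff is_expansion_prod factors)
  show "is_expansion (\<lambda>a b c. sin (of_int k * a + of_int l * b + of_int m * c))"
    unfolding sin_add3 by (intro is_expansion_add is_expansion_diff is_expansion_prod factors)
qed

lemma Re_trig111:
  "Re (trig111 q a b c) = (\<Sum>k\<in>{-1..1}. \<Sum>l\<in>{-1..1}. \<Sum>m\<in>{-1..1}.
      Re (q k l m) * cos (of_int k * a + of_int l * b + of_int m * c)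
      + (- Im (q k l m)) * sin (of_int k * a + of_int l * b + of_int m * c))"
  by (simp add: trig111_def Re_exp Im_exp)

lemma is_expansion_sigma111:
  assumes "g \<in> sigma111"
  shows "is_expansion g"
proof -
  obtain q where q: "\<And>a b c. complex_of_real (g a b c) = trig111 q a b c"
    using assms unfolding sigma111_def by blast
  then have "g = (\<lambda>a b c. Re (trig111 q a b c))"
    by (metis Re_complex_of_real)
  moreover have "is_expansion (\<lambda>a b c. Re (trig111 q a b c))"
    unfolding Re_trig111
    by (intro is_expansion_sum is_expansion_add is_expansion_scale is_expansion_cos_sin) auto
  ultimately show ?thesis by simp
qed

lemma has_real_derivative_expansion:
  "((\<lambda>t. expansion D t b c) has_real_derivative tensor_eval D basis_deriv basis basis t b c) (at t)"
  "((\<lambda>t. expansion D a t c) has_real_derivative tensor_eval D basis basis_deriv basis a t c) (at t)"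
  "((\<lambda>t. expansion D a b t) has_real_derivative tensor_eval D basis basis basis_deriv a b t) (at t)"
  unfolding tensor_eval_def
  by (intro DERIV_sum DERIV_cmult_right DERIV_cmult has_real_derivative_basis)+

definition critical_zero :: "(nat \<Rightarrow> nat \<Rightarrow> nat \<Rightarrow> real) \<Rightarrow> real \<Rightarrow> real \<Rightarrow> real \<Rightarrow> bool" where
  "critical_zero D x y z \<longleftrightarrow> expansion D x y z = 0 \<and>
     tensor_eval D basis_deriv basis basis x y z = 0 \<and>
     tensor_eval D basis basis_deriv basis x y z = 0 \<and>
     tensor_eval D basis basis basis_deriv x y z = 0"

lemma critical_zero_if_nonneg:
  assumes nonneg: "\<And>a b c. 0 \<le> expansion D a b c" and zero: "expansion D x y z = 0"
  shows "critical_zero D x y z"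
  unfolding critical_zero_def
proof (intro conjI zero)
  show "tensor_eval D basis_deriv basis basis x y z = 0"
    by (rule DERIV_local_min[OF has_real_derivative_expansion(1), of 1]) (use nonneg zero in auto)
  show "tensor_eval D basis basis_deriv basis x y z = 0"
    by (rule DERIV_local_min[OF has_real_derivative_expansion(2), of 1]) (use nonneg zero in auto)
  show "tensor_eval D basis basis basis_deriv x y z = 0"
    by (rule DERIV_local_min[OF has_real_derivative_expansion(3), of 1]) (use nonneg zero in auto)
qed

definition extreme_poly :: "real \<Rightarrow> real \<Rightarrow> real \<Rightarrow> real" where
  "extreme_poly = (\<lambda>\<alpha> \<beta> \<gamma>. 2 powr (3/2) - cos (\<alpha> + \<beta> + \<gamma>) - cos (- \<alpha> + \<beta> + \<gamma>)
                 - cos (\<alpha> - \<beta> + \<gamma>) + cos (\<alpha> + \<beta> - \<gamma>))"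

lemma powr_3_div_2: "(2::real) powr (3/2) = 2 * sqrt 2"
proof -
  have "(2::real) powr (3/2) = 2 powr (1 + 1/2)" by simp
  also have "\<dots> = 2 * sqrt 2" by (simp only: powr_add powr_one powr_half_sqrt)
  finally show ?thesis .
qed

lemma extreme_poly_expand:
  "extreme_poly a b c = 2 * sqrt 2 - 2 * (cos a * cos b * cos c - cos a * sin b * sin c
     - sin a * cos b * sin c + sin a * sin b * cos c)"
  unfolding extreme_poly_def powr_3_div_2
  by (simp add: cos_add sin_add cos_diff sin_diff algebra_simps)

lemma extreme_poly_nonneg: "0 \<le> extreme_poly a b c"
proof -
  define X where "X = cos (a - b)"
  define Y where "Y = sin (a + b)"
  have rotated: "cos a * cos b * cos c - cos a * sin b * sin c - sin a * cos b * sin c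
      + sin a * sin b * cos c = cos c * X - sin c * Y"
    unfolding X_def Y_def by (simp add: cos_diff sin_add algebra_simps)
  have "(cos c * X - sin c * Y)\<^sup>2 + (sin c * X + cos c * Y)\<^sup>2
      = ((sin c)\<^sup>2 + (cos c)\<^sup>2) * (X\<^sup>2 + Y\<^sup>2)"
    by algebra
  then have "(cos c * X - sin c * Y)\<^sup>2 \<le> X\<^sup>2 + Y\<^sup>2"
    by simp (smt (verit) zero_le_power2)
  also have "X\<^sup>2 + Y\<^sup>2 \<le> 2"
    unfolding X_def Y_def using sin_cos_squared_add[of "a - b"] sin_cos_squared_add[of "a + b"]
      zero_le_power2[of "sin (a - b)"] zero_le_power2[of "cos (a + b)"] by linarith
  finally have "cos c * X - sin c * Y \<le> sqrt 2"
    by (rule real_le_rsqrt)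
  then show ?thesis
    unfolding extreme_poly_expand rotated by simp
qed

definition extreme_coeffs :: "nat \<Rightarrow> nat \<Rightarrow> nat \<Rightarrow> real" where
  "extreme_coeffs i j k =
     (if i = 0 \<and> j = 0 \<and> k = 0 then 1
      else if i = 1 \<and> j = 1 \<and> k = 1 then - 1/4
      else if i = 1 \<and> j = 2 \<and> k = 2 then 1/4
      else if i = 2 \<and> j = 1 \<and> k = 2 then 1/4
      else if i = 2 \<and> j = 2 \<and> k = 1 then - 1/4 else 0)"

lemma extreme_poly_eq_expansion:
  "extreme_poly = expansion (\<lambda>i j k. 2 * sqrt 2 * extreme_coeffs i j k)"
proof (intro ext)
  fix a b c
  have sqrt2_cubed: "sqrt 2 * (sqrt 2 * x) * (sqrt 2 * y) * (sqrt 2 * z) = 4 * (x * y * z)"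
    for x y z :: real
  proof -
    have "sqrt 2 * (sqrt 2 * x) * (sqrt 2 * y) * (sqrt 2 * z)
        = (sqrt 2 * sqrt 2) * (sqrt 2 * sqrt 2) * (x * y * z)"
      by (simp only: mult_ac)
    then show ?thesis by simp
  qed
  show "extreme_poly a b c = expansion (\<lambda>i j k. 2 * sqrt 2 * extreme_coeffs i j k) a b c"
    unfolding extreme_poly_expand tensor_eval_def sum_lessThan_3
    by (simp add: extreme_coeffs_def basis_def sqrt2_cubed)
qed

definition extreme_fourier_coeffs :: "int \<Rightarrow> int \<Rightarrow> int \<Rightarrow> complex" where
  "extreme_fourier_coeffs k l m =
     (if k = 0 \<and> l = 0 \<and> m = 0 then complex_of_real (2 * sqrt 2)
      else if k \<noteq> 0 \<and> l \<noteq> 0 \<and> m \<noteq> 0 then (if k = l \<and> l = - m then 1/2 else - 1/2)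
      else 0)"

lemma extreme_poly_eq_trig111:
  "complex_of_real (extreme_poly a b c) = trig111 extreme_fourier_coeffs a b c"
proof -
  have exp_cis: "exp (\<i> * complex_of_real x) = complex_of_real (cos x) + \<i> * complex_of_real (sin x)"
    for x
    by (simp add: complex_eq_iff Re_exp Im_exp)
  have "{-1..1::int} = {-1, 0, 1}" by auto
  then show ?thesis
    unfolding trig111_def exp_cis
    by (simp add: extreme_fourier_coeffs_def extreme_poly_expand complex_eq_iff
        cos_add sin_add cos_diff sin_diff algebra_simps)
qed

lemma extreme_poly_in_sigma111: "extreme_poly \<in> sigma111"
  unfolding sigma111_def using extreme_poly_eq_trig111 extreme_poly_nonneg by blast

lemma cos_sin_3pi_div_4: "cos (3 * pi / 4) = - (sqrt 2 / 2)" "sin (3 * pi / 4) = sqrt 2 / 2"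
proof -
  have "3 * pi / 4 = pi - pi / 4" by simp
  then show "cos (3 * pi / 4) = - (sqrt 2 / 2)" "sin (3 * pi / 4) = sqrt 2 / 2"
    by (simp_all only: cos_pi_minus sin_pi_minus cos_45 sin_45)
qed

lemma basis_values:
  "basis 0 x = 1" "basis_deriv 0 x = 0"
  "basis 1 (pi/4) = 1" "basis 2 (pi/4) = 1"
  "basis_deriv 1 (pi/4) = -1" "basis_deriv 2 (pi/4) = 1"
  "basis 1 (- (pi/4)) = 1" "basis 2 (- (pi/4)) = -1"
  "basis_deriv 1 (- (pi/4)) = 1" "basis_deriv 2 (- (pi/4)) = 1"
  "basis 1 (3*pi/4) = -1" "basis 2 (3*pi/4) = 1"
  "basis_deriv 1 (3*pi/4) = -1" "basis_deriv 2 (3*pi/4) = -1"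
  "basis 1 (- (3*pi/4)) = -1" "basis 2 (- (3*pi/4)) = -1"
  "basis_deriv 1 (- (3*pi/4)) = 1" "basis_deriv 2 (- (3*pi/4)) = -1"
  by (simp_all add: basis_def basis_deriv_def cos_45 sin_45 cos_sin_3pi_div_4)

lemma extreme_poly_zeros:
  "extreme_poly (pi/4) (pi/4) (- (pi/4)) = 0"
  "extreme_poly (pi/4) (- (3*pi/4)) (3*pi/4) = 0"
  "extreme_poly (3*pi/4) (3*pi/4) (pi/4) = 0"
  "extreme_poly (3*pi/4) (- (pi/4)) (- (3*pi/4)) = 0"
  "extreme_poly (- (3*pi/4)) (pi/4) (3*pi/4) = 0"
  "extreme_poly (- (3*pi/4)) (- (3*pi/4)) (- (pi/4)) = 0"
  "extreme_poly (- (pi/4)) (3*pi/4) (- (3*pi/4)) = 0"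
  "extreme_poly (- (pi/4)) (- (pi/4)) (pi/4) = 0"
  unfolding extreme_poly_eq_expansion tensor_eval_def sum_lessThan_3 basis_values
  by (simp_all add: extreme_coeffs_def)

lemma expansion_eq_if_critical_at_zeros:
  assumes critical: "\<And>x y z. extreme_poly x y z = 0 \<Longrightarrow> critical_zero D x y z"
  shows "expansion D = expansion (\<lambda>i j k. D 0 0 0 * extreme_coeffs i j k)"
proof (rule tensor_eval_cong)
  fix i j k :: nat
  assume "i < 3" and "j < 3" and "k < 3"
  note linear_conditions = extreme_poly_zeros[THEN critical, unfolded critical_zero_def
      tensor_eval_def sum_lessThan_3 basis_values, simplified]
  have "i = 0 \<or> i = 1 \<or> i = 2" "j = 0 \<or> j = 1 \<or> j = 2" "k = 0 \<or> k = 1 \<or> k = 2"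
    using \<open>i < 3\<close> \<open>j < 3\<close> \<open>k < 3\<close> by auto
  then show "D i j k = D 0 0 0 * extreme_coeffs i j k"
    by (elim disjE; simp add: extreme_coeffs_def; use linear_conditions in argo)
qed

lemma extreme_poly_origin_pos: "0 < extreme_poly 0 0 0"
proof -
  have "1 < sqrt (2::real)" by simp
  then show ?thesis by (simp add: extreme_poly_expand)
qed

lemma dominated_by_extreme_poly:
  assumes g: "g \<in> sigma111" and le: "\<And>a b c. g a b c \<le> extreme_poly a b c"
  shows "\<exists>r\<ge>0. g = (\<lambda>a b c. r * extreme_poly a b c)"
proof -
  obtain D where gD: "g = expansion D"
    using is_expansion_sigma111[OF g] unfolding is_expansion_def by blast
  have nonneg: "0 \<le> expansion D a b c" for a b c
    using g unfolding gD sigma111_def by auto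
  have critical: "critical_zero D x y z" if "extreme_poly x y z = 0" for x y z
  proof (rule critical_zero_if_nonneg[OF nonneg])
    show "expansion D x y z = 0"
      using nonneg[of x y z] le[of x y z] that unfolding gD by simp
  qed
  define r where "r = D 0 0 0 / (2 * sqrt 2)"
  have "g = expansion (\<lambda>i j k. r * (2 * sqrt 2 * extreme_coeffs i j k))"
    unfolding gD r_def by (simp add: expansion_eq_if_critical_at_zeros[OF critical])
  then have g_eq: "g = (\<lambda>a b c. r * extreme_poly a b c)"
    by (simp add: fun_eq_iff tensor_eval_scale extreme_poly_eq_expansion)
  have "0 \<le> r * extreme_poly 0 0 0"
    using nonneg[of 0 0 0] by (simp add: gD [symmetric] g_eq)
  then have "0 \<le> r"
    using extreme_poly_origin_pos by (simp add: zero_le_mult_iff)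
  with g_eq show ?thesis by blast
qed

lemma extremal_inI:
  assumes "f \<in> U"
    and nonneg: "\<And>g a b c. g \<in> U \<Longrightarrow> 0 \<le> g a b c"
    and dominated: "\<And>g. g \<in> U \<Longrightarrow> (\<And>a b c. g a b c \<le> f a b c) \<Longrightarrow>
      \<exists>r\<ge>0. g = (\<lambda>a b c. r * f a b c)"
  shows "extremal_in U f"
  unfolding extremal_in_def
proof (intro conjI allI impI \<open>f \<in> U\<close>)
  fix g h assume g: "g \<in> U" and h: "h \<in> U" and f: "f = (\<lambda>a b c. g a b c + h a b c)"
  show "\<exists>r\<ge>0. g = (\<lambda>a b c. r * f a b c)"
    by (rule dominated[OF g]) (simp add: f nonneg[OF h])
  show "\<exists>r\<ge>0. h = (\<lambda>a b c. r * f a b c)"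
    by (rule dominated[OF h]) (simp add: f nonneg[OF g])
qed

theorem proposition7:
  shows "extremal_in sigma111
    (\<lambda>\<alpha> \<beta> \<gamma>. 2 powr (3/2) - cos (\<alpha> + \<beta> + \<gamma>) - cos (- \<alpha> + \<beta> + \<gamma>)
                 - cos (\<alpha> - \<beta> + \<gamma>) + cos (\<alpha> + \<beta> - \<gamma>))"
proof -
  have "extremal_in sigma111 extreme_poly"
  proof (rule extremal_inI[OF extreme_poly_in_sigma111])
    show "0 \<le> g a b c" if "g \<in> sigma111" for g a b c
      using that unfolding sigma111_def by blast
  qed (rule dominated_by_extreme_poly)
  then show ?thesis
    unfolding extreme_poly_def .
qed

end
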